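(* Let $\mathcal{C}$ be an arbitrary linear code of length $n$. For each $i = 1,2,\ldots,d(\mathcal{C})-1$, define $$w_i = \max\left\{\left\lceil \frac{n+1}{i}\right\rceil - 1,\ d(\mathcal{C}^\perp)\right\}.$$ Then $$\rho(\mathcal{C}) \ge \binom{n}{i} \Big/ \left( w_i \binom{n-w_i}{i-1}\right) \quad \text{for } i = 1,2,\ldots,d(\mathcal{C})-1.$$
   Context: A parity-check matrix for a linear code $\mathcal{C}$ (over a finite field) is any matrix (possibly with linearly dependent rows) whose rows span the dual code $\mathcal{C}^\perp$. $d(\mathcal{C})$ and $d(\mathcal{C}^\perp)$ denote the minimum Hamming distances of $\mathcal{C}$ and $\mathcal{C}^\perp$. For a parity-check matrix $H$, the stopping distance $s(H)$ is the largest integer such that for every set of $s(H)-1$ or fewer columns of $H$, the projection of $H$ onto those columns contains at least one row of Hamming weight exactly one. The stopping redundancy $\rho(\mathcal{C})$ is the smallest number of rows of a parity-check matrix $H$ for $\mathcal{C}$ with $s(H) = d(\mathcal{C})$. *)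

theory Defs
  imports Complex_Main
begin

text \<open>Words of length n = CARD('n) over a finite field 'a are functions 'n \<Rightarrow> 'a;
  coordinates (columns) are indexed by the finite type 'n.\<close>

definition linear_code :: "('n::finite \<Rightarrow> 'a::{field,finite}) set \<Rightarrow> bool" where
  "linear_code C \<longleftrightarrow> (\<lambda>j. 0) \<in> C \<and> (\<forall>x\<in>C. \<forall>y\<in>C. (\<lambda>j. x j + y j) \<in> C) \<and> (\<forall>c x. x \<in> C \<longrightarrow> (\<lambda>j. c * x j) \<in> C)"

definition hweight :: "('n::finite \<Rightarrow> 'a::zero) \<Rightarrow> nat" where
  "hweight x = card {j. x j \<noteq> 0}"

definition dual_code :: "('n::finite \<Rightarrow> 'a::{field,finite}) set \<Rightarrow> ('n \<Rightarrow> 'a) set" where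
  "dual_code C = {y. \<forall>x\<in>C. (\<Sum>j\<in>UNIV. x j * y j) = 0}"

text \<open>Minimum Hamming distance = minimum weight of a nonzero codeword (linear code).\<close>
definition min_dist :: "('n::finite \<Rightarrow> 'a::{field,finite}) set \<Rightarrow> nat" where
  "min_dist C = (LEAST w. \<exists>x\<in>C. x \<noteq> (\<lambda>j. 0) \<and> hweight x = w)"

text \<open>A matrix with m rows is a list of m rows (repetitions allowed).\<close>
definition row_span :: "('n::finite \<Rightarrow> 'a::{field,finite}) list \<Rightarrow> ('n \<Rightarrow> 'a) set" where
  "row_span H = {v. \<exists>c. v = (\<lambda>j. \<Sum>k<length H. c k * (H ! k) j)}"

definition is_parity_check :: "('n::finite \<Rightarrow> 'a::{field,finite}) list \<Rightarrow> ('n \<Rightarrow> 'a) set \<Rightarrow> bool" where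
  "is_parity_check H C \<longleftrightarrow> row_span H = dual_code C"

definition has_weight_one_row :: "('n::finite \<Rightarrow> 'a::{field,finite}) list \<Rightarrow> 'n set \<Rightarrow> bool" where
  "has_weight_one_row H S \<longleftrightarrow> (\<exists>r\<in>set H. card {j\<in>S. r j \<noteq> 0} = 1)"

definition stopping_distance :: "('n::finite \<Rightarrow> 'a::{field,finite}) list \<Rightarrow> nat" where
  "stopping_distance H =
     (GREATEST s. \<forall>S. S \<noteq> {} \<and> card S < s \<longrightarrow> has_weight_one_row H S)"

definition stopping_redundancy :: "('n::finite \<Rightarrow> 'a::{field,finite}) set \<Rightarrow> nat" where
  "stopping_redundancy C =
     (LEAST m. \<exists>H. length H = m \<and> is_parity_check H C \<and> stopping_distance H = min_dist C)"

end

theory Submission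
  imports Defs "HOL-Library.Function_Algebras"
begin

(* Listing all of the dual code as rows gives a parity-check matrix of stopping distance d(C):
   when |S| < d(C), the dual code restricted to S is the whole space on S (otherwise a nonzero
   codeword would be supported inside S), so it has a word of weight one on S; and no dual word
   has weight one on the support of a minimum-weight codeword.  So rho(C) is attained by some H.
   In such an H every i-set S of columns, 1 <= i < d(C), meets the support of some row in exactly
   one position.  A row of weight t does this for at most t * C(n - t, i - 1) sets S, and
   t * C(n - t, i - 1) increases up to floor(n / i) = ceil((n + 1) / i) - 1 and decreases after it;
   as nonzero rows have weight t >= d(C^perp), each row covers at most w_i * C(n - w_i, i - 1)
   of the C(n, i) sets. *)

lemma sum_fun_apply: "(\<Sum>a\<in>A. f a) x = (\<Sum>a\<in>A. f a x)"
  by (induct A rule: infinite_finite_induct) auto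

lemma dual_code_separates:
  fixes W :: "('n::finite \<Rightarrow> 'a::{field,finite}) set"
  assumes lin: "linear_code W" and v: "v \<notin> W"
  shows "\<exists>y\<in>dual_code W. (\<Sum>j\<in>UNIV. v j * y j) = 1"
proof -
  define sc where "sc = (\<lambda>(c::'a) (x::'n \<Rightarrow> 'a) j. c * x j)"
  interpret V: vector_space sc
    by unfold_locales (auto simp: sc_def fun_eq_iff algebra_simps)
  interpret F: vector_space "(*) :: 'a \<Rightarrow> 'a \<Rightarrow> 'a"
    by unfold_locales (auto simp: algebra_simps)
  interpret P: vector_space_pair sc "(*) :: 'a \<Rightarrow> 'a \<Rightarrow> 'a" ..
  have "V.subspace W"
    by (rule V.subspaceI) (use lin in \<open>auto simp: linear_code_def sc_def zero_fun_def plus_fun_def\<close>)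
  obtain B where B: "B \<subseteq> W" "V.independent B" "W \<subseteq> V.span B"
    by (rule V.maximal_independent_subset)
  have "v \<notin> V.span B"
    using V.span_minimal[OF B(1) \<open>V.subspace W\<close>] v by blast
  then have "V.independent (insert v B)" and "v \<notin> B"
    using V.independent_insertI[OF _ B(2)] V.span_base by blast+
  then obtain g where "Vector_Spaces.linear sc (*) g" and gv: "g v = 1" and gB: "\<forall>x\<in>B. g x = 0"
    using P.linear_independent_extend[of "insert v B" "\<lambda>x. if x = v then 1 else 0"] by force
  then interpret G: Vector_Spaces.linear sc "(*)" g
    by simp
  have gW: "g x = 0" if "x \<in> W" for x
    using G.eq_0_on_span gB B(3) that by blast
  define y where "y j = g (\<lambda>k. of_bool (k = j))" for j
  have "g x = (\<Sum>j\<in>UNIV. x j * y j)" for x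
  proof -
    have "x = (\<Sum>j\<in>UNIV. sc (x j) (\<lambda>k. of_bool (k = j)))"
      by (simp add: fun_eq_iff sc_def sum_fun_apply)
    then have "g x = (\<Sum>j\<in>UNIV. g (sc (x j) (\<lambda>k. of_bool (k = j))))"
      by (metis G.sum)
    then show ?thesis
      by (simp add: G.scale y_def)
  qed
  then show ?thesis
    using gW gv unfolding dual_code_def by auto
qed

lemma dual_code_has_weight_one_word:
  fixes C :: "('n::finite \<Rightarrow> 'a::{field,finite}) set"
  assumes lin: "linear_code C"
    and heavy: "\<And>x. x \<in> C \<Longrightarrow> x \<noteq> (\<lambda>j. 0) \<Longrightarrow> card S < hweight x"
    and j0: "j0 \<in> S"
  shows "\<exists>y\<in>dual_code C. card {j\<in>S. y j \<noteq> 0} = 1"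
proof -
  \<comment> \<open>W is C plus all words supported on S - {j0}.  A dual word of W taking the value 1
    on the unit vector at j0 is the required y.\<close>
  define W where "W = {x. \<exists>c\<in>C. \<forall>j. j \<notin> S - {j0} \<longrightarrow> x j = c j}"
  define e :: "'n \<Rightarrow> 'n \<Rightarrow> 'a" where "e i k = of_bool (k = i)" for i k
  have C0: "(\<lambda>j. 0) \<in> C" and Cadd: "\<And>x y. x \<in> C \<Longrightarrow> y \<in> C \<Longrightarrow> (\<lambda>j. x j + y j) \<in> C"
    and Cscale: "\<And>c x. x \<in> C \<Longrightarrow> (\<lambda>j. c * x j) \<in> C"
    using lin unfolding linear_code_def by blast+
  have "linear_code W"
    unfolding linear_code_def
  proof (intro conjI ballI allI impI)
    show "(\<lambda>j. 0) \<in> W"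
      unfolding W_def using C0 by force
    show "(\<lambda>j. x j + y j) \<in> W" if xy: "x \<in> W" "y \<in> W" for x y
    proof -
      obtain c c' where "c \<in> C" "c' \<in> C"
        and "\<forall>j. j \<notin> S - {j0} \<longrightarrow> x j = c j" "\<forall>j. j \<notin> S - {j0} \<longrightarrow> y j = c' j"
        using xy unfolding W_def by blast
      then show ?thesis
        unfolding W_def by (auto intro!: bexI[OF _ Cadd[of c c']])
    qed
    show "(\<lambda>j. a * x j) \<in> W" if x: "x \<in> W" for a x
    proof -
      obtain c where "c \<in> C" "\<forall>j. j \<notin> S - {j0} \<longrightarrow> x j = c j"
        using x unfolding W_def by blast
      then show ?thesis
        unfolding W_def by (auto intro!: bexI[OF _ Cscale[of c a]])
    qed
  qed
  moreover have "e j0 \<notin> W"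
  proof
    assume "e j0 \<in> W"
    then obtain c where c: "c \<in> C" "\<forall>j. j \<notin> S - {j0} \<longrightarrow> e j0 j = c j"
      unfolding W_def by blast
    then have "c j0 = 1"
      using c(2)[rule_format, of j0] by (simp add: e_def)
    then have "c \<noteq> (\<lambda>j. 0)"
      by auto
    moreover have "{j. c j \<noteq> 0} \<subseteq> S"
    proof
      fix j
      assume "j \<in> {j. c j \<noteq> 0}"
      then show "j \<in> S"
        using c(2) j0 by (cases "j = j0") (auto simp: e_def)
    qed
    then have "hweight c \<le> card S"
      unfolding hweight_def by (simp add: card_mono)
    ultimately show False
      using heavy[OF c(1)] by simp
  qed
  ultimately obtain y where yW: "y \<in> dual_code W" and yj0: "(\<Sum>j\<in>UNIV. e j0 j * y j) = 1"
    using dual_code_separates by blast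
  have "C \<subseteq> W"
    unfolding W_def by blast
  then have "y \<in> dual_code C"
    using yW unfolding dual_code_def by blast
  have "e j \<in> W" if "j \<in> S - {j0}" for j
    unfolding W_def using C0 that by (auto simp: e_def)
  then have "y j = 0" if "j \<in> S - {j0}" for j
    using yW that unfolding dual_code_def by (force simp: e_def)
  with yj0 j0 have "{j\<in>S. y j \<noteq> 0} = {j0}"
    by (auto simp: e_def)
  then show ?thesis
    using \<open>y \<in> dual_code C\<close> by (intro bexI[of _ y]) simp_all
qed

lemma min_dist_attained:
  assumes "\<exists>x\<in>C. x \<noteq> (\<lambda>j. 0)"
  obtains x where "x \<in> C" "x \<noteq> (\<lambda>j. 0)" "hweight x = min_dist C"
  using LeastI_ex[of "\<lambda>w. \<exists>x\<in>C. x \<noteq> (\<lambda>j. 0) \<and> hweight x = w"] assms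
  unfolding min_dist_def by blast

lemma min_dist_le_hweight: "x \<in> C \<Longrightarrow> x \<noteq> (\<lambda>j. 0) \<Longrightarrow> min_dist C \<le> hweight x"
  unfolding min_dist_def by (rule Least_le) blast

lemma row_in_row_span:
  assumes "y \<in> set H"
  shows "y \<in> row_span H"
proof -
  obtain k where "k < length H" "H ! k = y"
    using assms by (metis in_set_conv_nth)
  then have "y = (\<lambda>j. \<Sum>k'<length H. of_bool (k' = k) * (H ! k') j)"
    by (simp add: Int_def Collect_conv_if)
  then show ?thesis
    unfolding row_span_def by (intro CollectI exI)
qed

lemma row_span_subset_dual_code:
  assumes "set H \<subseteq> dual_code C"
  shows "row_span H \<subseteq> dual_code C"
proof
  fix v
  assume "v \<in> row_span H"
  then obtain c where v: "v = (\<lambda>j. \<Sum>k<length H. c k * (H ! k) j)"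
    unfolding row_span_def by blast
  have "(\<Sum>j\<in>UNIV. x j * v j) = 0" if "x \<in> C" for x
  proof -
    have "(\<Sum>j\<in>UNIV. x j * v j) = (\<Sum>j\<in>UNIV. \<Sum>k<length H. c k * (x j * (H ! k) j))"
      unfolding v by (simp add: sum_distrib_left algebra_simps)
    also have "\<dots> = (\<Sum>k<length H. c k * (\<Sum>j\<in>UNIV. x j * (H ! k) j))"
      by (subst sum.swap) (simp add: sum_distrib_left)
    also have "\<dots> = 0"
    proof (intro sum.neutral ballI)
      fix k
      assume "k \<in> {..<length H}"
      then have "H ! k \<in> dual_code C"
        using assms by auto
      then show "c k * (\<Sum>j\<in>UNIV. x j * (H ! k) j) = 0"
        using \<open>x \<in> C\<close> unfolding dual_code_def by simp
    qed
    finally show ?thesis .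
  qed
  then show "v \<in> dual_code C"
    unfolding dual_code_def by blast
qed

lemma is_parity_check_if_set_eq_dual_code:
  "set H = dual_code C \<Longrightarrow> is_parity_check H C"
  unfolding is_parity_check_def
  using row_span_subset_dual_code[of H C] row_in_row_span[of _ H] by blast

lemma no_weight_one_row_on_support:
  assumes "set H \<subseteq> dual_code C" and "x \<in> C"
  shows "\<not> has_weight_one_row H {j. x j \<noteq> 0}"
proof
  assume "has_weight_one_row H {j. x j \<noteq> 0}"
  then obtain r j0 where r: "r \<in> set H" and j0: "{j \<in> {j. x j \<noteq> 0}. r j \<noteq> 0} = {j0}"
    unfolding has_weight_one_row_def by (metis card_1_singletonE)
  have "(\<Sum>j\<in>UNIV. x j * r j) = (\<Sum>j\<in>UNIV. if j = j0 then x j0 * r j0 else 0)"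
    using j0 by (intro sum.cong) (auto simp: set_eq_iff)
  also have "\<dots> \<noteq> 0"
    using j0 by auto
  finally show False
    using assms r unfolding dual_code_def by blast
qed

lemma stopping_distance_eqI:
  assumes "\<And>S. S \<noteq> {} \<Longrightarrow> card S < d \<Longrightarrow> has_weight_one_row H S"
    and "S0 \<noteq> {}" "card S0 = d" "\<not> has_weight_one_row H S0"
  shows "stopping_distance H = d"
  unfolding stopping_distance_def
proof (rule Greatest_equality)
  show "\<forall>S. S \<noteq> {} \<and> card S < d \<longrightarrow> has_weight_one_row H S"
    using assms(1) by blast
  show "s \<le> d" if "\<forall>S. S \<noteq> {} \<and> card S < s \<longrightarrow> has_weight_one_row H S" for s
    using that assms(2-4) by (metis not_le)
qed

lemma has_weight_one_row_below_stopping_distance: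
  assumes "S \<noteq> {}" and "card S < stopping_distance H"
  shows "has_weight_one_row H S"
proof -
  define P where "P s \<longleftrightarrow> (\<forall>S. S \<noteq> {} \<and> card S < s \<longrightarrow> has_weight_one_row H S)" for s
  have sd: "stopping_distance H = Greatest P"
    unfolding stopping_distance_def P_def ..
  show ?thesis
  proof (cases "\<forall>s. P s")
    case True
    then show ?thesis
      using assms(1) unfolding P_def by blast
  next
    case False
    then obtain s0 where s0: "\<not> P s0"
      by blast
    have "s \<le> s0" if "P s" for s
    proof (rule ccontr)
      assume "\<not> s \<le> s0"
      then have "P s0"
        using that unfolding P_def by auto
      with s0 show False
        by contradiction
    qed
    moreover have "P 0"
      unfolding P_def by simp
    ultimately have "P (Greatest P)"
      by (rule GreatestI_nat[rotated])
    then show ?thesis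
      using assms unfolding sd P_def by blast
  qed
qed

lemma stopping_distance_of_dual_code_rows:
  fixes C :: "('n::finite \<Rightarrow> 'a::{field,finite}) set"
  assumes "linear_code C" and "\<exists>x\<in>C. x \<noteq> (\<lambda>j. 0)" and H: "set H = dual_code C"
  shows "stopping_distance H = min_dist C"
proof -
  obtain x0 where x0: "x0 \<in> C" "x0 \<noteq> (\<lambda>j. 0)" "hweight x0 = min_dist C"
    using min_dist_attained[OF assms(2)] .
  show ?thesis
  proof (rule stopping_distance_eqI)
    fix S :: "'n set"
    assume "S \<noteq> {}" and small: "card S < min_dist C"
    then obtain j0 where "j0 \<in> S"
      by blast
    have "card S < hweight x" if "x \<in> C" "x \<noteq> (\<lambda>j. 0)" for x
      using min_dist_le_hweight[OF that] small by simp
    then obtain y where "y \<in> dual_code C" "card {j\<in>S. y j \<noteq> 0} = 1"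
      using dual_code_has_weight_one_word[OF assms(1) _ \<open>j0 \<in> S\<close>] by blast
    then show "has_weight_one_row H S"
      unfolding has_weight_one_row_def H by blast
  next
    show "{j. x0 j \<noteq> 0} \<noteq> {}" "card {j. x0 j \<noteq> 0} = min_dist C"
      using x0 unfolding hweight_def by auto
    show "\<not> has_weight_one_row H {j. x0 j \<noteq> 0}"
      using no_weight_one_row_on_support H x0(1) by blast
  qed
qed

lemma stopping_redundancy_attained:
  fixes C :: "('n::finite \<Rightarrow> 'a::{field,finite}) set"
  assumes "linear_code C" and "\<exists>x\<in>C. x \<noteq> (\<lambda>j. 0)"
  obtains H where "length H = stopping_redundancy C" "is_parity_check H C"
    "stopping_distance H = min_dist C"
proof -
  obtain H0 where "set H0 = dual_code C"
    using finite_list[of "dual_code C"] by auto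
  then have "\<exists>H. length H = length H0 \<and> is_parity_check H C \<and> stopping_distance H = min_dist C"
    using is_parity_check_if_set_eq_dual_code stopping_distance_of_dual_code_rows assms by blast
  then have "\<exists>H. length H = stopping_redundancy C \<and> is_parity_check H C
      \<and> stopping_distance H = min_dist C"
    unfolding stopping_redundancy_def by (rule LeastI)
  then show thesis
    using that by blast
qed

lemma card_subsets_meeting_support_once:
  fixes r :: "'n::finite \<Rightarrow> 'a::zero"
  shows "card {S. card S = i \<and> card {j\<in>S. r j \<noteq> 0} = 1}
    \<le> hweight r * ((card (UNIV :: 'n set) - hweight r) choose (i - 1))"
proof -
  define Z where "Z = {j. r j \<noteq> 0}"
  define X where "X = Z \<times> {B. B \<subseteq> -Z \<and> card B = i - 1}"
  have "{S. card S = i \<and> card {j\<in>S. r j \<noteq> 0} = 1} \<subseteq> (\<lambda>(a, B). insert a B) ` X"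
  proof
    fix S :: "'n set"
    assume "S \<in> {S. card S = i \<and> card {j\<in>S. r j \<noteq> 0} = 1}"
    then have "card S = i" "card {j\<in>S. r j \<noteq> 0} = 1"
      by auto
    then obtain a where "{j\<in>S. r j \<noteq> 0} = {a}"
      by (metis card_1_singletonE)
    moreover from this have "a \<in> S"
      by blast
    ultimately have "(a, S - {a}) \<in> X" and "S = insert a (S - {a})"
      using \<open>card S = i\<close> unfolding X_def Z_def by auto
    then show "S \<in> (\<lambda>(a, B). insert a B) ` X"
      by (metis (no_types, lifting) case_prod_conv image_eqI)
  qed
  then have "card {S. card S = i \<and> card {j\<in>S. r j \<noteq> 0} = 1} \<le> card ((\<lambda>(a, B). insert a B) ` X)"
    by (intro card_mono) simp_all
  also have "\<dots> \<le> card X"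
    by (rule card_image_le) simp
  also have "card X = card Z * ((card (UNIV :: 'n set) - card Z) choose (i - 1))"
    unfolding X_def card_cartesian_product by (simp add: n_subsets Compl_eq_Diff_UNIV card_Diff_subset)
  finally show ?thesis
    unfolding hweight_def Z_def .
qed

lemma binomial_le_length_mult_cover_bound:
  fixes H :: "('n::finite \<Rightarrow> 'a::{field,finite}) list"
  assumes cover: "\<And>S. card S = i \<Longrightarrow> has_weight_one_row H S"
    and bound: "\<And>r. r \<in> set H \<Longrightarrow> hweight r * ((card (UNIV :: 'n set) - hweight r) choose (i - 1)) \<le> F"
  shows "card (UNIV :: 'n set) choose i \<le> length H * F"
proof -
  define A where "A r = {S. card S = i \<and> card {j\<in>S. r j \<noteq> 0} = 1}" for r :: "'n \<Rightarrow> 'a"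
  have "{S. card S = i} \<subseteq> (\<Union>r\<in>set H. A r)"
    using cover unfolding A_def has_weight_one_row_def by blast
  then have "card (UNIV :: 'n set) choose i \<le> card (\<Union>r\<in>set H. A r)"
    using card_mono[of "\<Union>r\<in>set H. A r" "{S. card S = i}"] n_subsets[of "UNIV :: 'n set" i]
    by simp
  also have "\<dots> \<le> (\<Sum>r\<in>set H. card (A r))"
    by (rule card_UN_le) simp
  also have "\<dots> \<le> card (set H) * F"
    using sum_bounded_above[of "set H" "\<lambda>r. card (A r)" F] bound
      card_subsets_meeting_support_once[where 'a='a] le_trans
    unfolding A_def by fastforce
  also have "\<dots> \<le> length H * F"
    by (simp add: card_length)
  finally show ?thesis .
qed

lemma mult_choose_le_succ:
  assumes "t < n" and "(t + 1) * k \<le> n - t"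
  shows "t * ((n - t) choose k) \<le> (t + 1) * ((n - (t + 1)) choose k)"
proof -
  define m where "m = n - t"
  have "(t + 1) * (m - k) = t * m + m - (t + 1) * k"
    by (simp add: diff_mult_distrib2)
  then have "t * m \<le> (t + 1) * (m - k)"
    using assms(2) unfolding m_def by linarith
  then have "m * (t * (m choose k)) \<le> (t + 1) * ((m - k) * (m choose k))"
    by (metis mult.assoc mult.commute mult_le_mono1)
  also have "\<dots> = m * ((t + 1) * ((m - 1) choose k))"
    by (simp add: binomial_absorb_comp mult.left_commute)
  finally show ?thesis
    using assms(1) unfolding m_def by (simp add: diff_diff_add)
qed

lemma mult_choose_succ_le:
  assumes "t < n" and "n - t \<le> (t + 1) * k"
  shows "(t + 1) * ((n - (t + 1)) choose k) \<le> t * ((n - t) choose k)"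
proof -
  define m where "m = n - t"
  have "(t + 1) * (m - k) = t * m + m - (t + 1) * k"
    by (simp add: diff_mult_distrib2)
  then have "(t + 1) * (m - k) \<le> t * m"
    using assms(2) unfolding m_def by linarith
  have "m * ((t + 1) * ((m - 1) choose k)) = (t + 1) * ((m - k) * (m choose k))"
    by (simp add: binomial_absorb_comp mult.left_commute)
  also have "\<dots> \<le> m * (t * (m choose k))"
    using \<open>(t + 1) * (m - k) \<le> t * m\<close> by (metis mult.assoc mult.commute mult_le_mono1)
  finally show ?thesis
    using assms(1) unfolding m_def by (simp add: diff_diff_add)
qed

lemma nat_ceiling_succ_div_minus_one:
  assumes "1 \<le> i"
  shows "nat (\<lceil>real (n + 1) / real i\<rceil> - 1) = n div i"
proof -
  have "n div i * i < n + 1"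
    by (simp add: le_imp_less_Suc)
  moreover have "n + 1 \<le> (n div i + 1) * i"
    using dividend_less_times_div[of i n] assms by (simp add: algebra_simps)
  ultimately have "real (n div i * i) < real (n + 1)" and "real (n + 1) \<le> real ((n div i + 1) * i)"
    by (simp_all only: of_nat_less_iff of_nat_le_iff)
  then have "\<lceil>real (n + 1) / real i\<rceil> = int (n div i) + 1"
    using assms by (simp add: ceiling_eq_iff field_simps)
  then show ?thesis
    by simp
qed

lemma mult_choose_mono_upto_div:
  assumes "s \<le> s'" and "s' \<le> n div i"
  shows "s * ((n - s) choose (i - 1)) \<le> s' * ((n - s') choose (i - 1))"
  using assms
proof (induction s' rule: dec_induct)
  case base
  then show ?case
    by simp
next
  case (step t)
  have "(t + 1) * i \<le> n div i * i"
    using step.prems by (intro mult_le_mono1) simp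
  also have "\<dots> \<le> n"
    by simp
  finally have "(t + 1) * (i - 1) \<le> n - t"
    by (simp add: diff_mult_distrib2)
  moreover have "t < n"
    using step.prems div_le_dividend[of n i] by linarith
  ultimately have "t * ((n - t) choose (i - 1)) \<le> (t + 1) * ((n - (t + 1)) choose (i - 1))"
    by (intro mult_choose_le_succ)
  then show ?case
    using step.IH step.prems by simp
qed

lemma mult_choose_antimono_from_div:
  assumes "1 \<le> i" and "n div i \<le> s" and "s \<le> s'" and "s' \<le> n"
  shows "s' * ((n - s') choose (i - 1)) \<le> s * ((n - s) choose (i - 1))"
  using assms(3,4)
proof (induction s' rule: dec_induct)
  case base
  then show ?case
    by simp
next
  case (step t)
  have "n < (n div i + 1) * i"
    using dividend_less_times_div[of i n] assms(1) by (simp add: algebra_simps)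
  also have "\<dots> \<le> (t + 1) * i"
    using assms(2) step.hyps(1) by simp
  finally have "n - t \<le> (t + 1) * (i - 1)"
    by (simp add: diff_mult_distrib2)
  then have "(t + 1) * ((n - (t + 1)) choose (i - 1)) \<le> t * ((n - t) choose (i - 1))"
    using step.prems by (intro mult_choose_succ_le) simp_all
  then show ?case
    using step.IH step.prems by simp
qed

lemma mult_choose_le_max_div:
  assumes "1 \<le> i" and "d \<le> t" and "t \<le> n"
  shows "t * ((n - t) choose (i - 1)) \<le> max (n div i) d * ((n - max (n div i) d) choose (i - 1))"
proof (cases "t \<le> n div i")
  case True
  then show ?thesis
    using mult_choose_mono_upto_div[of t "n div i"] assms(2) by simp
next
  case False
  then show ?thesis
    using mult_choose_antimono_from_div[OF assms(1), where s = "max (n div i) d" and s' = t] assms(2,3)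
    by simp
qed

lemma hweight_mult_choose_le_min_dist:
  fixes D :: "('n::finite \<Rightarrow> 'a::{field,finite}) set"
  assumes "r \<in> D" and "1 \<le> i" and w: "w = max (card (UNIV :: 'n set) div i) (min_dist D)"
  shows "hweight r * ((card (UNIV :: 'n set) - hweight r) choose (i - 1))
    \<le> w * ((card (UNIV :: 'n set) - w) choose (i - 1))"
proof (cases "r = (\<lambda>j. 0)")
  case True
  then show ?thesis
    by (simp add: hweight_def)
next
  case False
  then have "min_dist D \<le> hweight r"
    using min_dist_le_hweight assms(1) by blast
  moreover have "hweight r \<le> card (UNIV :: 'n set)"
    unfolding hweight_def by (simp add: card_mono)
  ultimately show ?thesis
    unfolding w by (rule mult_choose_le_max_div[OF assms(2)])
qed

lemma binomial_le_stopping_redundancy_mult: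
  fixes C :: "('n::finite \<Rightarrow> 'a::{field,finite}) set"
  assumes "linear_code C" and "\<exists>x\<in>C. x \<noteq> (\<lambda>j. 0)"
    and "1 \<le> i" and "i < min_dist C"
    and w: "w = max (card (UNIV :: 'n set) div i) (min_dist (dual_code C))"
  shows "card (UNIV :: 'n set) choose i
    \<le> stopping_redundancy C * (w * ((card (UNIV :: 'n set) - w) choose (i - 1)))"
proof -
  obtain H where H: "length H = stopping_redundancy C" "is_parity_check H C"
    "stopping_distance H = min_dist C"
    using stopping_redundancy_attained[OF assms(1,2)] .
  then have rows: "set H \<subseteq> dual_code C"
    using row_in_row_span unfolding is_parity_check_def by blast
  show ?thesis
    unfolding H(1)[symmetric]
  proof (rule binomial_le_length_mult_cover_bound)
    fix S :: "'n set"
    assume "card S = i"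
    then have "S \<noteq> {}" and "card S < stopping_distance H"
      using H(3) assms(3,4) by auto
    then show "has_weight_one_row H S"
      by (rule has_weight_one_row_below_stopping_distance)
  next
    fix r
    assume "r \<in> set H"
    then show "hweight r * ((card (UNIV :: 'n set) - hweight r) choose (i - 1))
      \<le> w * ((card (UNIV :: 'n set) - w) choose (i - 1))"
      using rows by (intro hweight_mult_choose_le_min_dist[OF _ assms(3) w]) blast
  qed
qed

theorem theorem5:
  fixes C :: "('n::finite \<Rightarrow> 'a::{field,finite}) set"
    and n i w :: nat
  assumes "linear_code C"
    and "\<exists>x\<in>C. x \<noteq> (\<lambda>j. 0)"
    and "n = card (UNIV :: 'n set)"
    and "1 \<le> i" and "i \<le> min_dist C - 1"
    and "w = max (nat (\<lceil>real (n + 1) / real i\<rceil> - 1)) (min_dist (dual_code C))"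
  shows "real (stopping_redundancy C)
           \<ge> real (n choose i) / (real w * real ((n - w) choose (i - 1)))"
proof -
  have "w = max (n div i) (min_dist (dual_code C))"
    unfolding assms(6) nat_ceiling_succ_div_minus_one[OF assms(4)] ..
  then have "n choose i \<le> stopping_redundancy C * (w * ((n - w) choose (i - 1)))"
    unfolding assms(3) using assms(4,5)
    by (intro binomial_le_stopping_redundancy_mult[OF assms(1,2)]) simp_all
  then have count: "real (n choose i)
      \<le> real (stopping_redundancy C) * (real w * real ((n - w) choose (i - 1)))"
    by (metis of_nat_le_iff of_nat_mult)
  have div_le: "a / c \<le> m" if "a \<le> m * c" and "0 \<le> c" and "0 \<le> m" for a c m :: real
    using that by (cases "c = 0") (simp_all add: pos_divide_le_eq)
  show ?thesis
    by (rule div_le[OF count]) simp_all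
qed

end
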